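(* Let $\mathbb F$ have characteristic $0$, view $\mathbb F^k$ as an $\mathbb F$-algebra with coordinatewise multiplication, let $\mathbf a_1,\dots,\mathbf a_n\in\mathbb F^k$, $d\ge0$, and $D(\mathbf x)=(\mathbf 1+\mathbf a_1x_1+\dots+\mathbf a_nx_n)^d\in\mathbb F^k[\mathbf x]$, where $\mathbf 1$ is the all-ones vector. Then $D$ has a cone-closed basis.
   Context: For $D\in\mathbb F^k[\mathbf x]$, $\mathrm{lrsp}(D)$ is the span of its coefficient vectors. A set of monomials is cone-closed if it contains every submonomial ($\mathbf x^{\mathbf e'}$ with $\mathbf e'\le\mathbf e$ coordinatewise) of each element; $D$ has a cone-closed basis if there is a cone-closed set of monomials whose coefficient vectors form a basis of $\mathrm{lrsp}(D)$. *)

theory Defs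
  imports "HOL-Analysis.Analysis" "HOL-Library.Poly_Mapping"
begin

text \<open>Monomials are exponent vectors
  (nat =>0 nat); a polynomial maps each monomial to its coefficient vector.\<close>

type_synonym ('a, 'k) vpoly = "(nat \<Rightarrow>\<^sub>0 nat) \<Rightarrow>\<^sub>0 ('a ^ 'k)"

definition lrsp :: "('a::field, 'k::finite) vpoly \<Rightarrow> ('a ^ 'k) set" where
  "lrsp D = vec.span (range (Poly_Mapping.lookup D))"

definition cone_closed :: "(nat \<Rightarrow>\<^sub>0 nat) set \<Rightarrow> bool" where
  "cone_closed S \<longleftrightarrow> (\<forall>e\<in>S. \<forall>e'. (\<forall>i. Poly_Mapping.lookup e' i \<le> Poly_Mapping.lookup e i) \<longrightarrow> e' \<in> S)"

definition has_cone_closed_basis :: "('a::field, 'k::finite) vpoly \<Rightarrow> bool" where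
  "has_cone_closed_basis D \<longleftrightarrow>
     (\<exists>S. cone_closed S \<and> inj_on (Poly_Mapping.lookup D) S \<and> vec.independent (Poly_Mapping.lookup D ` S)
          \<and> vec.span (Poly_Mapping.lookup D ` S) = lrsp D)"

definition var_term :: "nat \<Rightarrow> 'a ^ 'k \<Rightarrow> ('a::field, 'k::finite) vpoly" where
  "var_term i c = Poly_Mapping.single (Poly_Mapping.single i 1) c"

end

theory Submission
  imports Defs
begin

text \<open>Expanding the power, the coefficient of \<open>x\<^sup>e\<close> in \<open>D\<close> is \<open>m\<^sub>e a\<^sup>e\<close>, where
  \<open>a\<^sup>e = \<Prod>\<^sub>i a\<^sub>i\<^bsup>e\<^sub>i\<^esup>\<close> (coordinatewise product) and \<open>m\<^sub>e\<close> is a multinomial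
  coefficient, which in characteristic 0 is nonzero exactly when \<open>|e| \<le> d\<close>. So
  \<open>lrsp(D)\<close> is spanned by the vectors \<open>a\<^sup>e\<close> with \<open>|e| \<le> d\<close>, and scaling them does not
  change which of them depend on earlier ones. Walk through these exponents in a graded order
  compatible with addition and keep each \<open>e\<close> for which \<open>a\<^sup>e\<close> is not a combination of
  earlier \<open>a\<^sup>g\<close>: the kept exponents index a basis. They form a cone-closed set, since a
  relation expressing \<open>a\<^sup>e\<close> by earlier \<open>a\<^sup>g\<close> becomes, after multiplying
  coordinatewise by \<open>a\<^sup>f\<close>, a relation expressing \<open>a\<^bsup>e+f\<^esup>\<close> by the earlier
  \<open>a\<^bsup>g+f\<^esup>\<close>, whose exponents still have degree at most \<open>d\<close>.\<close>

lemma diff_single_add_cancel: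
  assumes "0 < Poly_Mapping.lookup e i"
  shows "e - Poly_Mapping.single i 1 + Poly_Mapping.single i (1::nat) = e"
  using assms by (intro poly_mapping_eqI) (auto simp: lookup_add lookup_minus lookup_single when_def)

lemma eq_add_single_iff:
  assumes "0 < Poly_Mapping.lookup e i"
  shows "e = l + Poly_Mapping.single i (1::nat) \<longleftrightarrow> l = e - Poly_Mapping.single i 1"
  using diff_single_add_cancel[OF assms] by (metis add_diff_cancel_right')

lemma lookup_mult_var:
  fixes p :: "(nat \<Rightarrow>\<^sub>0 nat) \<Rightarrow>\<^sub>0 'b::comm_semiring_1"
  shows "Poly_Mapping.lookup (p * Poly_Mapping.single (Poly_Mapping.single i 1) c) e =
    (if 0 < Poly_Mapping.lookup e i
     then Poly_Mapping.lookup p (e - Poly_Mapping.single i 1) * c else 0)"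
proof -
  let ?x = "Poly_Mapping.single i (1::nat)"
  have "Poly_Mapping.lookup (p * Poly_Mapping.single ?x c) e =
      Sum_any (\<lambda>l. Poly_Mapping.lookup p l * c when e = l + ?x)"
    unfolding lookup_mult lookup_single
    by (simp only: when_commute[of c] Sum_any_when_equal' mult_when)
  also have "\<dots> = (if 0 < Poly_Mapping.lookup e i then Poly_Mapping.lookup p (e - ?x) * c else 0)"
  proof (cases "0 < Poly_Mapping.lookup e i")
    case True
    then show ?thesis
      by (simp only: eq_add_single_iff Sum_any_when_equal if_True)
  next
    case False
    then have "e \<noteq> l + ?x" for l
      by (metis add_gr_0 lookup_add lookup_single_eq zero_less_one)
    with False show ?thesis
      by simp
  qed
  finally show ?thesis .
qed

definition total_degree :: "nat \<Rightarrow> (nat \<Rightarrow>\<^sub>0 nat) \<Rightarrow> nat" where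
  "total_degree n e = (\<Sum>i<n. Poly_Mapping.lookup e i)"

lemma total_degree_add: "total_degree n (e + f) = total_degree n e + total_degree n f"
  by (simp add: total_degree_def lookup_add sum.distrib)

lemma total_degree_single: "i < n \<Longrightarrow> total_degree n (Poly_Mapping.single i 1) = 1"
  by (simp add: total_degree_def lookup_single when_def)

lemma total_degree_diff_single:
  assumes "i < n" "0 < Poly_Mapping.lookup e i"
  shows "total_degree n e = total_degree n (e - Poly_Mapping.single i 1) + 1"
  by (metis assms diff_single_add_cancel total_degree_add total_degree_single)

definition monomial_value :: "(nat \<Rightarrow> 'b::comm_monoid_mult) \<Rightarrow> nat \<Rightarrow> (nat \<Rightarrow>\<^sub>0 nat) \<Rightarrow> 'b"
  where "monomial_value a n e = (\<Prod>i<n. a i ^ Poly_Mapping.lookup e i)"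

lemma monomial_value_add:
  "monomial_value a n (e + f) = monomial_value a n e * monomial_value a n f"
  by (simp add: monomial_value_def lookup_add power_add prod.distrib)

lemma monomial_value_single: "i < n \<Longrightarrow> monomial_value a n (Poly_Mapping.single i 1) = a i"
  by (simp add: monomial_value_def lookup_single when_def if_distrib[of "power _"] cong: if_cong)

lemma monomial_value_diff_single:
  assumes "i < n" "0 < Poly_Mapping.lookup e i"
  shows "monomial_value a n (e - Poly_Mapping.single i 1) * a i = monomial_value a n e"
  by (metis assms diff_single_add_cancel monomial_value_add monomial_value_single)

text \<open>The coefficient of \<open>x\<^sup>e\<close> in \<open>(1 + x\<^sub>0 + \<dots> + x\<^bsub>n-1\<^esub>)\<^sup>d\<close>, that is, the
  multinomial coefficient \<open>d! / (e\<^sub>0! \<cdots> e\<^bsub>n-1\<^esub>! (d - |e|)!)\<close>, computed by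
  multiplying with one factor at a time.\<close>
fun multinomial_count :: "nat \<Rightarrow> nat \<Rightarrow> (nat \<Rightarrow>\<^sub>0 nat) \<Rightarrow> nat" where
  "multinomial_count n 0 e = (if e = 0 then 1 else 0)"
| "multinomial_count n (Suc d) e = multinomial_count n d e +
     (\<Sum>i<n. if 0 < Poly_Mapping.lookup e i
             then multinomial_count n d (e - Poly_Mapping.single i 1) else 0)"

lemma lookup_power_linear_form:
  fixes a :: "nat \<Rightarrow> 'b::comm_ring_1"
  shows "Poly_Mapping.lookup ((1 + (\<Sum>i<n. Poly_Mapping.single (Poly_Mapping.single i 1) (a i))) ^ d) e
     = of_nat (multinomial_count n d e) * monomial_value a n e"
proof (induction d arbitrary: e)
  case 0
  then show ?case
    by (simp add: lookup_one monomial_value_def when_def)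
next
  case (Suc d)
  let ?P = "1 + (\<Sum>i<n. Poly_Mapping.single (Poly_Mapping.single i 1) (a i))"
  let ?e' = "\<lambda>i. e - Poly_Mapping.single i 1"
  let ?count = "\<lambda>e. of_nat (multinomial_count n d e)"
  have expand: "?P ^ Suc d = ?P ^ d +
      (\<Sum>i<n. ?P ^ d * Poly_Mapping.single (Poly_Mapping.single i 1) (a i))"
    by (simp only: power_Suc2 distrib_left sum_distrib_left mult_1_right)
  have "Poly_Mapping.lookup (?P ^ Suc d) e = ?count e * monomial_value a n e +
      (\<Sum>i<n. if 0 < Poly_Mapping.lookup e i
              then ?count (?e' i) * (monomial_value a n (?e' i) * a i) else 0)"
    unfolding expand lookup_add lookup_sum lookup_mult_var Suc.IH
    by (simp add: if_distrib mult.assoc cong: if_cong)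
  also have "\<dots> = ?count e * monomial_value a n e +
      (\<Sum>i<n. (if 0 < Poly_Mapping.lookup e i then ?count (?e' i) else 0) * monomial_value a n e)"
    by (intro arg_cong2[where f = "(+)"] sum.cong refl)
      (auto simp: monomial_value_diff_single[unfolded One_nat_def])
  also have "\<dots> = of_nat (multinomial_count n (Suc d) e) * monomial_value a n e"
    by (simp add: distrib_right sum_distrib_right if_distrib cong: if_cong)
  finally show ?case .
qed

definition monomial_box :: "nat \<Rightarrow> nat \<Rightarrow> (nat \<Rightarrow>\<^sub>0 nat) set" where
  "monomial_box n d = {e. total_degree n e \<le> d \<and> (\<forall>i\<ge>n. Poly_Mapping.lookup e i = 0)}"

lemma monomial_box_0: "monomial_box n 0 = {0}"
proof -
  have "e = 0" if "total_degree n e = 0" "\<forall>i\<ge>n. Poly_Mapping.lookup e i = 0" for e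
  proof (rule poly_mapping_eqI)
    fix k
    show "Poly_Mapping.lookup e k = Poly_Mapping.lookup 0 k"
      using that by (cases "k < n") (auto simp: total_degree_def)
  qed
  then show ?thesis
    by (auto simp: monomial_box_def total_degree_def)
qed

lemma diff_single_in_monomial_box_iff:
  assumes "i < n" "0 < Poly_Mapping.lookup e i"
  shows "e - Poly_Mapping.single i 1 \<in> monomial_box n d \<longleftrightarrow> e \<in> monomial_box n (Suc d)"
proof -
  have "Poly_Mapping.lookup (e - Poly_Mapping.single i 1) j = Poly_Mapping.lookup e j"
    if "n \<le> j" for j
    using assms(1) that by (simp add: lookup_minus lookup_single)
  with total_degree_diff_single[OF assms] show ?thesis
    by (simp add: monomial_box_def)
qed

lemma monomial_box_Suc:
  "e \<in> monomial_box n (Suc d) \<longleftrightarrow> e \<in> monomial_box n d \<or>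
     (\<exists>i<n. 0 < Poly_Mapping.lookup e i \<and> e - Poly_Mapping.single i 1 \<in> monomial_box n d)"
proof (cases "total_degree n e \<le> d")
  case True
  then have "e \<in> monomial_box n (Suc d) \<longleftrightarrow> e \<in> monomial_box n d"
    by (simp add: monomial_box_def)
  then show ?thesis
    using diff_single_in_monomial_box_iff by blast
next
  case False
  then have "e \<notin> monomial_box n d" "total_degree n e \<noteq> 0"
    by (auto simp: monomial_box_def)
  moreover obtain i where "i < n" "0 < Poly_Mapping.lookup e i"
    using \<open>total_degree n e \<noteq> 0\<close> sum.neutral[of "{..<n}" "Poly_Mapping.lookup e"]
    by (auto simp: total_degree_def)
  ultimately show ?thesis
    using diff_single_in_monomial_box_iff by blast
qed

lemma multinomial_count_pos_iff: "0 < multinomial_count n d e \<longleftrightarrow> e \<in> monomial_box n d"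
proof (induction d arbitrary: e)
  case 0
  then show ?case
    by (simp add: monomial_box_0)
next
  case (Suc d)
  have "0 < multinomial_count n (Suc d) e \<longleftrightarrow> 0 < multinomial_count n d e \<or>
      (\<exists>i<n. 0 < Poly_Mapping.lookup e i \<and>
        0 < multinomial_count n d (e - Poly_Mapping.single i 1))"
    by (auto simp del: neq0_conv simp: neq0_conv[symmetric])
  then show ?case
    by (simp only: Suc.IH monomial_box_Suc)
qed

lemma finite_monomial_box: "finite (monomial_box n d)"
proof -
  let ?F = "{f. \<forall>i. (i \<in> {..<n} \<longrightarrow> f i \<in> {..d}) \<and> (i \<notin> {..<n} \<longrightarrow> (f i :: nat) = 0)}"
  have "Poly_Mapping.lookup e i \<le> d" if "e \<in> monomial_box n d" "i < n" for e i
    using that member_le_sum[of i "{..<n}" "Poly_Mapping.lookup e"]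
    by (simp add: monomial_box_def total_degree_def)
  then have "Poly_Mapping.lookup ` monomial_box n d \<subseteq> ?F"
    by (auto simp: monomial_box_def)
  moreover have "finite ?F"
    by (rule finite_set_of_finite_funs) auto
  ultimately have "finite (Poly_Mapping.lookup ` monomial_box n d)"
    by (rule finite_subset)
  then show ?thesis
    by (rule finite_imageD) (simp add: inj_on_def poly_mapping_eqI)
qed

lemma acyclic_Restr_of_order:
  assumes "trans r" "irrefl r"
  shows "acyclic (Restr r A)"
proof -
  have "acyclic r"
    using assms by (simp add: acyclic_irrefl)
  then show ?thesis
    by (rule acyclic_subset) blast
qed

lemma finite_order_has_greatest:
  assumes "finite A" "A \<noteq> {}" "trans r" "irrefl r" "total_on A r"
  obtains x where "x \<in> A" "A - {x} \<subseteq> {y \<in> A. (y, x) \<in> r}"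
proof -
  have "wf ((Restr r A)\<inverse>)"
    using assms by (intro finite_acyclic_wf_converse acyclic_Restr_of_order) auto
  moreover obtain x0 where "x0 \<in> A"
    using assms(2) by blast
  ultimately obtain x where x: "x \<in> A" and x_max: "\<And>y. (y, x) \<in> (Restr r A)\<inverse> \<Longrightarrow> y \<notin> A"
    by (rule wfE_min) blast
  have "(y, x) \<in> r" if y: "y \<in> A - {x}" for y
  proof -
    have "(x, y) \<notin> r"
      using x_max[of y] x y by blast
    then show ?thesis
      using assms(5) x y unfolding total_on_def by blast
  qed
  with x show ?thesis
    using that by blast
qed

context vector_space
begin

definition greedy_selection :: "('c \<Rightarrow> 'b) \<Rightarrow> 'c rel \<Rightarrow> 'c set \<Rightarrow> 'c set" where
  "greedy_selection f r B = {x \<in> B. f x \<notin> span (f ` {y \<in> B. (y, x) \<in> r})}"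

lemma span_rescaled:
  assumes "\<And>x. x \<in> X \<Longrightarrow> m x \<noteq> 0"
  shows "span ((\<lambda>x. scale (m x) (f x)) ` X) = span (f ` X)"
proof -
  have "f x \<in> span ((\<lambda>x. scale (m x) (f x)) ` X)" if x: "x \<in> X" for x
  proof -
    have "scale (inverse (m x)) (scale (m x) (f x)) \<in> span ((\<lambda>x. scale (m x) (f x)) ` X)"
      using x by (intro span_scale span_base) auto
    then show ?thesis
      using assms[OF x] by simp
  qed
  moreover have "scale (m x) (f x) \<in> span (f ` X)" if "x \<in> X" for x
    using that by (intro span_scale span_base) auto
  ultimately show ?thesis
    unfolding span_eq by blast
qed

lemma greedy_selection_rescaled:
  assumes "\<And>x. x \<in> B \<Longrightarrow> m x \<noteq> 0"
  shows "local.greedy_selection (\<lambda>x. scale (m x) (f x)) r B = local.greedy_selection f r B"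
proof -
  have "scale (m x) (f x) \<in> span (f ` Y) \<longleftrightarrow> f x \<in> span (f ` Y)" if "x \<in> B" for x Y
    using span_scale[of "scale (m x) (f x)" _ "inverse (m x)"] span_scale[of "f x" _ "m x"]
      assms[OF that] by auto
  moreover have "span ((\<lambda>y. scale (m y) (f y)) ` {y \<in> B. (y, x) \<in> r}) =
      span (f ` {y \<in> B. (y, x) \<in> r})" for x
    using assms by (intro span_rescaled) auto
  ultimately show ?thesis
    unfolding greedy_selection_def by auto
qed

lemma span_greedy_selection:
  assumes "finite B" "trans r" "irrefl r"
  shows "span (f ` local.greedy_selection f r B) = span (f ` B)"
proof -
  let ?S = "local.greedy_selection f r B"
  have "wf (Restr r B)"
    using assms by (intro finite_acyclic_wf acyclic_Restr_of_order) auto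
  then have "x \<in> B \<longrightarrow> f x \<in> span (f ` ?S)" for x
  proof (induction x rule: wf_induct_rule)
    case (less x)
    show ?case
    proof
      assume x: "x \<in> B"
      show "f x \<in> span (f ` ?S)"
      proof (cases "x \<in> ?S")
        case True
        then show ?thesis
          by (auto intro: span_base)
      next
        case False
        then have "f x \<in> span (f ` {y \<in> B. (y, x) \<in> r})"
          using x by (simp add: greedy_selection_def)
        moreover have "span (f ` {y \<in> B. (y, x) \<in> r}) \<subseteq> span (f ` ?S)"
          using less x by (intro span_minimal subspace_span) auto
        ultimately show ?thesis
          by blast
      qed
    qed
  qed
  moreover have "?S \<subseteq> B"
    by (auto simp: greedy_selection_def)
  ultimately show ?thesis
    unfolding span_eq by (auto intro: span_base)
qed

lemma independent_if_not_in_span_below: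
  assumes "finite S" "trans r" "irrefl r" "total_on S r"
    and "\<And>x. x \<in> S \<Longrightarrow> f x \<notin> span (f ` {y \<in> S. (y, x) \<in> r})"
  shows "inj_on f S \<and> independent (f ` S)"
  using assms(1,4,5)
proof (induction S rule: finite_remove_induct)
  case empty
  then show ?case
    by (simp add: independent_empty)
next
  case (remove A)
  obtain x where x: "x \<in> A" and below: "A - {x} \<subseteq> {y \<in> A. (y, x) \<in> r}"
    using finite_order_has_greatest[OF remove.hyps(1,2) assms(2,3) remove.prems(1)] by blast
  have "inj_on f (A - {x}) \<and> independent (f ` (A - {x}))"
  proof (rule remove.IH[OF x])
    show "total_on (A - {x}) r"
      using remove.prems(1) by (auto simp: total_on_def)
    show "f y \<notin> span (f ` {z \<in> A - {x}. (z, y) \<in> r})" if y: "y \<in> A - {x}" for y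
    proof
      assume "f y \<in> span (f ` {z \<in> A - {x}. (z, y) \<in> r})"
      also have "\<dots> \<subseteq> span (f ` {z \<in> A. (z, y) \<in> r})"
        by (intro span_mono image_mono) blast
      finally show False
        using remove.prems(2) y by blast
    qed
  qed
  moreover have x_new: "f x \<notin> span (f ` (A - {x}))"
    using remove.prems(2)[OF x] span_mono[OF image_mono[OF below]] by blast
  moreover have "f x \<notin> f ` (A - {x})"
    using x_new span_base[of "f x" "f ` (A - {x})"] by blast
  ultimately have "inj_on f (insert x (A - {x})) \<and> independent (insert (f x) (f ` (A - {x})))"
    by (simp only: inj_on_insert independent_insert Diff_idemp if_False) blast
  then show ?case
    using insert_Diff[OF x] by (metis image_insert)
qed

lemma independent_greedy_selection:
  assumes "finite B" "trans r" "irrefl r" "total_on B r"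
  shows "inj_on f (local.greedy_selection f r B) \<and> independent (f ` local.greedy_selection f r B)"
proof (rule independent_if_not_in_span_below)
  have below: "{y \<in> local.greedy_selection f r B. (y, x) \<in> r} \<subseteq> {y \<in> B. (y, x) \<in> r}" for x
    by (auto simp: greedy_selection_def)
  show "f x \<notin> span (f ` {y \<in> local.greedy_selection f r B. (y, x) \<in> r})"
    if "x \<in> local.greedy_selection f r B" for x
    using that span_mono[OF image_mono[OF below]] unfolding greedy_selection_def by blast
  show "finite (local.greedy_selection f r B)" "total_on (local.greedy_selection f r B) r"
    using assms(1,4) by (auto simp: greedy_selection_def total_on_def)
qed (use assms in auto)

end

lemma span_mult_right:
  fixes w :: "'a::field ^ 'k"
  assumes "x \<in> vec.span X"
  shows "x * w \<in> vec.span ((\<lambda>v. v * w) ` X)"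
proof -
  have "Vector_Spaces.linear (*s) (*s) (\<lambda>v::'a ^ 'k. v * w)"
    by unfold_locales (simp_all add: vec_eq_iff algebra_simps)
  then show ?thesis
    using assms by (simp add: vec.linear_span_image)
qed

text \<open>Ties are broken by the library's linear order on exponent vectors, which
  is invariant under translation; that invariance is all the cone argument needs.\<close>
definition graded_less :: "nat \<Rightarrow> (nat \<Rightarrow>\<^sub>0 nat) rel" where
  "graded_less n = {(g, e). total_degree n g < total_degree n e \<or>
     total_degree n g = total_degree n e \<and> g < e}"

lemma trans_graded_less: "trans (graded_less n)"
  by (rule transI) (auto simp: graded_less_def)

lemma irrefl_graded_less: "irrefl (graded_less n)"
  by (rule irreflI) (simp add: graded_less_def)

lemma total_graded_less: "total (graded_less n)"
  by (auto simp: total_on_def graded_less_def)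

lemma graded_less_add_right: "(g, e) \<in> graded_less n \<Longrightarrow> (g + f, e + f) \<in> graded_less n"
  by (auto simp: graded_less_def total_degree_add)

lemma add_in_monomial_boxD: "e + f \<in> monomial_box n d \<Longrightarrow> e \<in> monomial_box n d"
  by (simp add: monomial_box_def total_degree_add lookup_add)

lemma graded_less_add_in_monomial_box:
  assumes "(g, e) \<in> graded_less n" "g \<in> monomial_box n d" "e + f \<in> monomial_box n d"
  shows "g + f \<in> monomial_box n d"
proof -
  have "total_degree n g \<le> total_degree n e"
    using assms(1) by (auto simp: graded_less_def)
  with assms(2,3) show ?thesis
    by (simp add: monomial_box_def total_degree_add lookup_add)
qed

lemma cone_closed_greedy_selection_graded:
  fixes p :: "(nat \<Rightarrow>\<^sub>0 nat) \<Rightarrow> 'a::field ^ 'k" and n d :: nat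
  assumes p_add: "\<And>e f. p (e + f) = p e * p f"
  shows "cone_closed (vec.greedy_selection p (graded_less n) (monomial_box n d))"
proof -
  define below where "below e = {g \<in> monomial_box n d. (g, e) \<in> graded_less n}" for e
  let ?S = "{e \<in> monomial_box n d. p e \<notin> vec.span (p ` below e)}"
  have S_eq: "vec.greedy_selection p (graded_less n) (monomial_box n d) = ?S"
    by (simp add: vec.greedy_selection_def below_def)
  have closed_under_sum: "e \<in> ?S" if ef: "e + f \<in> ?S" for e f
  proof (rule ccontr)
    have ef_box: "e + f \<in> monomial_box n d"
      and ef_new: "p (e + f) \<notin> vec.span (p ` below (e + f))"
      using ef by simp_all
    have "e \<in> monomial_box n d"
      using ef_box by (rule add_in_monomial_boxD)
    moreover assume "e \<notin> ?S"
    ultimately have "p e \<in> vec.span (p ` below e)"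
      by simp
    then have "p e * p f \<in> vec.span ((\<lambda>v. v * p f) ` p ` below e)"
      by (rule span_mult_right)
    also have "(\<lambda>v. v * p f) ` p ` below e = p ` (\<lambda>g. g + f) ` below e"
      by (simp add: image_image p_add)
    also have "vec.span (p ` (\<lambda>g. g + f) ` below e) \<subseteq> vec.span (p ` below (e + f))"
      using ef_box by (intro vec.span_mono image_mono)
        (auto simp: below_def intro: graded_less_add_right graded_less_add_in_monomial_box)
    finally have "p (e + f) \<in> vec.span (p ` below (e + f))"
      by (simp only: p_add)
    with ef_new show False
      by contradiction
  qed
  show ?thesis
    unfolding S_eq cone_closed_def
  proof (intro ballI allI impI)
    fix e e'
    assume e: "e \<in> ?S" and le: "\<forall>i. Poly_Mapping.lookup e' i \<le> Poly_Mapping.lookup e i"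
    have "e' + (e - e') = e"
      using le by (intro poly_mapping_eqI) (simp add: lookup_add lookup_minus)
    with e show "e' \<in> ?S"
      using closed_under_sum[of e' "e - e'"] by simp
  qed
qed

theorem lemmaD1:
  fixes a :: "nat \<Rightarrow> ('a::field_char_0) ^ 'k::finite" and n d :: nat
  shows "has_cone_closed_basis ((1 + (\<Sum>i<n. var_term i (a i))) ^ d :: ('a, 'k) vpoly)"
proof -
  define B where "B = monomial_box n d"
  define m where "m e = (of_nat (multinomial_count n d e) :: 'a)" for e
  define c where "c = Poly_Mapping.lookup ((1 + (\<Sum>i<n. var_term i (a i))) ^ d :: ('a, 'k) vpoly)"
  define S where "S = vec.greedy_selection c (graded_less n) B"
  have c_eq: "c = (\<lambda>e. m e *s monomial_value a n e)"
    unfolding c_def var_term_def lookup_power_linear_form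
    by (simp add: m_def fun_eq_iff vec_eq_iff of_nat_index)
  have m_nonzero: "m e \<noteq> 0 \<longleftrightarrow> e \<in> B" for e
    by (simp add: m_def B_def flip: multinomial_count_pos_iff)
  have "S = vec.greedy_selection (monomial_value a n) (graded_less n) B"
    unfolding S_def c_eq by (rule vec.greedy_selection_rescaled) (simp add: m_nonzero)
  then have "cone_closed S"
    using cone_closed_greedy_selection_graded[of "monomial_value a n", OF monomial_value_add]
    by (simp add: B_def)
  moreover have "inj_on c S \<and> vec.independent (c ` S)" "vec.span (c ` S) = vec.span (c ` B)"
    unfolding S_def B_def
    by (simp_all add: vec.independent_greedy_selection vec.span_greedy_selection finite_monomial_box
        trans_graded_less irrefl_graded_less total_graded_less[THEN total_on_subset])
  moreover have "lrsp ((1 + (\<Sum>i<n. var_term i (a i))) ^ d) = vec.span (c ` B)"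
  proof -
    have "c e \<in> vec.span (c ` B)" for e
      using m_nonzero[of e] by (cases "e \<in> B") (auto simp: c_eq intro: vec.span_base vec.span_zero)
    then show ?thesis
      unfolding lrsp_def c_def[symmetric] vec.span_eq by (auto intro: vec.span_base)
  qed
  ultimately show ?thesis
    unfolding has_cone_closed_basis_def c_def[symmetric] by blast
qed

end
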